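(* Let $S$ be an infinite set and $\mathcal{F}\subseteq 2^S$ nontrivial and closed under finite unions. Let $\mathbf{A}=(A_1,\dots,A_k)$ be a classification problem with $k>1$. Then $\mathbf{A}\in\mathit{core}_k(\mathcal{F})$ if and only if $A_1\cup\dots\cup A_k$ is $\mathcal{F}$-cohesive.
   Context: $\mathcal{F}$ is nontrivial if $\emptyset,S\in\mathcal{F}$ and for all $Q\in\mathcal{F}$ and finite $E\subseteq S$ both $Q\cup E\in\mathcal{F}$ and $Q\setminus E\in\mathcal{F}$. A classification problem is a vector $(A_1,\dots,A_k)$, $k\ge1$, of pairwise disjoint infinite subsets of $S$, of length $k$. For vectors $\mathbf{B}=(B_1,\dots,B_m)$, $\mathbf{Q}=(Q_1,\dots,Q_k)$, $\mathbf{B}\le\mathbf{Q}$ means $1\le m\le k$ and there is an injective $\sigma:\{1,\dots,m\}\to\{1,\dots,k\}$ with $B_i\subseteq Q_{\sigma(i)}$. An $\mathcal{F}$-partition is a vector of pairwise disjoint members of $\mathcal{F}$ whose union is $S$. $\mathit{class}_k(\mathcal{F})$: classification problems $\mathbf{A}$ of length $k$ with $\mathbf{A}\le\mathbf{Q}$ for some $\mathcal{F}$-partition $\mathbf{Q}$ of length $k$. For $k>1$, $\mathit{core}_k(\mathcal{F})$ is the set of classification problems $\mathbf{A}$ of length $k$ such that every classification problem $\mathbf{A}'\le\mathbf{A}$ with $|\mathbf{A}'|>1$ satisfies $\mathbf{A}'\notin\mathit{class}_{|\mathbf{A}'|}(\mathcal{F})$. A set $A\subseteq S$ is $\mathcal{F}$-cohesive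 if $A$ is infinite and for every $Q$ with $Q\in\mathcal{F}$ and $S\setminus Q\in\mathcal{F}$, either $A\cap Q$ or $A\setminus Q$ is finite. *)

theory Defs
  imports Main
begin

text \<open>Vectors of sets are represented as lists; positions are 0-based.\<close>

definition nontrivial :: "'a set \<Rightarrow> 'a set set \<Rightarrow> bool" where
  "nontrivial S F \<longleftrightarrow> {} \<in> F \<and> S \<in> F \<and>
     (\<forall>Q\<in>F. \<forall>E. E \<subseteq> S \<and> finite E \<longrightarrow> Q \<union> E \<in> F \<and> Q - E \<in> F)"

definition closed_fin_unions :: "'a set set \<Rightarrow> bool" where
  "closed_fin_unions F \<longleftrightarrow> (\<forall>P Q. P \<in> F \<and> Q \<in> F \<longrightarrow> P \<union> Q \<in> F)"

definition pairwise_disj :: "'a set list \<Rightarrow> bool" where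
  "pairwise_disj As \<longleftrightarrow>
     (\<forall>i j. i < length As \<and> j < length As \<and> i \<noteq> j \<longrightarrow> As ! i \<inter> As ! j = {})"

definition class_problem :: "'a set \<Rightarrow> 'a set list \<Rightarrow> bool" where
  "class_problem S As \<longleftrightarrow> length As \<ge> 1 \<and> pairwise_disj As \<and>
     (\<forall>i < length As. infinite (As ! i) \<and> As ! i \<subseteq> S)"

definition vec_le :: "'a set list \<Rightarrow> 'a set list \<Rightarrow> bool" where
  "vec_le B Q \<longleftrightarrow> 1 \<le> length B \<and> length B \<le> length Q \<and>
     (\<exists>\<sigma>. inj_on \<sigma> {0..<length B} \<and> \<sigma> ` {0..<length B} \<subseteq> {0..<length Q} \<and>
         (\<forall>i < length B. B ! i \<subseteq> Q ! (\<sigma> i)))"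

definition F_partition :: "'a set \<Rightarrow> 'a set set \<Rightarrow> 'a set list \<Rightarrow> bool" where
  "F_partition S F Q \<longleftrightarrow> pairwise_disj Q \<and> set Q \<subseteq> F \<and> \<Union>(set Q) = S"

definition class_k :: "'a set \<Rightarrow> 'a set set \<Rightarrow> nat \<Rightarrow> 'a set list set" where
  "class_k S F k = {A. class_problem S A \<and> length A = k \<and>
      (\<exists>Q. F_partition S F Q \<and> length Q = k \<and> vec_le A Q)}"

definition core_k :: "'a set \<Rightarrow> 'a set set \<Rightarrow> nat \<Rightarrow> 'a set list set" where
  "core_k S F k = {A. class_problem S A \<and> length A = k \<and>
      (\<forall>A'. class_problem S A' \<and> vec_le A' A \<and> length A' > 1 \<longrightarrow>
            A' \<notin> class_k S F (length A'))}"

definition cohesive :: "'a set \<Rightarrow> 'a set set \<Rightarrow> 'a set \<Rightarrow> bool" where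
  "cohesive S F A \<longleftrightarrow> infinite A \<and>
     (\<forall>Q. Q \<in> F \<and> S - Q \<in> F \<longrightarrow> finite (A \<inter> Q) \<or> finite (A - Q))"

end

theory Submission
  imports Defs
begin

text \<open>If the union U of the A_i is cohesive, every sub-problem A' with at least two blocks lies
  inside U, hence has cohesive union; but a classifying F-partition would separate the first two
  blocks of A' by a block P of the partition, and S - P is in F as a finite union of the other
  blocks. Conversely, if U is split by a complemented Q \<in> F into two infinite halves, some two
  distinct A_a, A_b meet Q resp. S - Q infinitely, and the two-block problem
  [A_a \<inter> Q, A_b - Q] is classified by the partition [Q, S - Q].\<close>

lemma closed_fin_unions_Union:
  assumes "closed_fin_unions F" "{} \<in> F" "finite X" "X \<subseteq> F"
  shows "\<Union>X \<in> F"
  using assms(3,4)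
proof (induction X rule: finite_induct)
  case empty
  then show ?case using assms(2) by simp
next
  case (insert x X)
  then show ?case using assms(1) unfolding closed_fin_unions_def by auto
qed

lemma F_partition_Diff_nth:
  assumes "F_partition S F Q" "i < length Q"
  shows "S - Q ! i = \<Union>((!) Q ` ({..<length Q} - {i}))"
  using assms unfolding F_partition_def pairwise_disj_def
  by (auto simp: in_set_conv_nth) (metis nth_mem)+

lemma F_partition_Diff_nth_in_F:
  assumes "closed_fin_unions F" "{} \<in> F" "F_partition S F Q" "i < length Q"
  shows "S - Q ! i \<in> F"
proof -
  have "(!) Q ` ({..<length Q} - {i}) \<subseteq> F"
    using assms(3) nth_mem unfolding F_partition_def by blast
  then show ?thesis
    unfolding F_partition_Diff_nth[OF assms(3,4)]
    by (intro closed_fin_unions_Union assms(1,2)) auto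
qed

lemma cohesive_subset:
  assumes "cohesive S F U" "B \<subseteq> U" "infinite B"
  shows "cohesive S F B"
  using assms unfolding cohesive_def by (meson Diff_mono Int_mono finite_subset order_refl)

lemma vec_le_Union_subset:
  assumes "vec_le B A"
  shows "\<Union>(set B) \<subseteq> \<Union>(set A)"
proof
  fix x assume "x \<in> \<Union>(set B)"
  then obtain i where i: "i < length B" "x \<in> B ! i" by (auto simp: in_set_conv_nth)
  obtain \<sigma> where "\<sigma> ` {0..<length B} \<subseteq> {0..<length A}" "\<forall>i < length B. B ! i \<subseteq> A ! \<sigma> i"
    using assms unfolding vec_le_def by blast
  with i have "\<sigma> i < length A" "x \<in> A ! \<sigma> i" by (auto simp: image_subset_iff)
  then show "x \<in> \<Union>(set A)" by (meson UnionI nth_mem)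
qed

lemma class_k_not_cohesive:
  assumes "closed_fin_unions F" "{} \<in> F" "B \<in> class_k S F m" "m > 1"
  shows "\<not> cohesive S F (\<Union>(set B))"
proof
  assume coh: "cohesive S F (\<Union>(set B))"
  obtain Q where Q: "F_partition S F Q" "length Q = m" "vec_le B Q"
    and B: "class_problem S B" "length B = m"
    using assms(3) unfolding class_k_def by blast
  then obtain \<sigma> where \<sigma>: "inj_on \<sigma> {0..<m}" "\<sigma> ` {0..<m} \<subseteq> {0..<m}"
    "\<forall>i < m. B ! i \<subseteq> Q ! \<sigma> i"
    unfolding vec_le_def by auto
  have idx: "0 < m" "1 < m" using assms(4) by auto
  have \<sigma>_range: "\<sigma> 0 < m" "\<sigma> 1 < m"
    using \<sigma>(2) idx by (auto simp: image_subset_iff)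
  have "\<sigma> 0 \<noteq> \<sigma> 1"
    using inj_onD[OF \<sigma>(1), of 0 1] idx by auto
  with \<sigma>_range have Q1: "Q ! \<sigma> 1 \<subseteq> S - Q ! \<sigma> 0"
    using Q(1,2) nth_mem[of "\<sigma> 1" Q] unfolding F_partition_def pairwise_disj_def by auto
  let ?P = "Q ! \<sigma> 0"
  have "?P \<in> F" "S - ?P \<in> F"
    using Q(1,2) \<sigma>_range(1) F_partition_Diff_nth_in_F[OF assms(1,2)]
    unfolding F_partition_def by auto
  moreover have "infinite (B ! 0)" "infinite (B ! 1)"
    using B idx unfolding class_problem_def by auto
  moreover have "B ! 0 \<in> set B" "B ! 1 \<in> set B"
    using idx B(2) by simp_all
  then have "B ! 0 \<subseteq> \<Union>(set B) \<inter> ?P" "B ! 1 \<subseteq> \<Union>(set B) - ?P"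
    using \<sigma>(3) Q1 idx by auto
  ultimately show False
    using coh unfolding cohesive_def by (meson finite_subset)
qed

lemma class_problem_pair_in_class_2:
  assumes "Q \<in> F" "S - Q \<in> F" "Q \<subseteq> S"
    and "B1 \<subseteq> Q" "B2 \<subseteq> S - Q" "infinite B1" "infinite B2"
  shows "[B1, B2] \<in> class_k S F 2"
proof -
  have "class_problem S [B1, B2]"
    using assms unfolding class_problem_def pairwise_disj_def
    by (auto simp: less_Suc_eq nth_Cons')
  moreover have "F_partition S F [Q, S - Q]"
    using assms(1-3) unfolding F_partition_def pairwise_disj_def
    by (auto simp: less_Suc_eq nth_Cons')
  moreover have "vec_le [B1, B2] [Q, S - Q]"
    unfolding vec_le_def using assms(4,5)
    by (auto intro!: exI[of _ id] simp: less_Suc_eq nth_Cons')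
  ultimately show ?thesis unfolding class_k_def by auto
qed

lemma vec_le_pair:
  assumes "a < length A" "b < length A" "a \<noteq> b" "B1 \<subseteq> A ! a" "B2 \<subseteq> A ! b"
  shows "vec_le [B1, B2] A"
proof -
  have "length A \<ge> 2" using assms(1-3) by linarith
  then show ?thesis
    unfolding vec_le_def using assms
    by (auto intro!: exI[of _ "\<lambda>n. if n = 0 then a else b"]
        simp: inj_on_def less_Suc_eq nth_Cons')
qed

lemma split_Union_distinct_blocks:
  assumes "\<And>i. i < length A \<Longrightarrow> infinite (A ! i)" "length A > 1"
    and "infinite (\<Union>(set A) \<inter> Q)" "infinite (\<Union>(set A) - Q)"
  obtains a b where "a < length A" "b < length A" "a \<noteq> b"
    "infinite (A ! a \<inter> Q)" "infinite (A ! b - Q)"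
proof -
  have "\<Union>(set A) \<inter> Q = (\<Union>X\<in>set A. X \<inter> Q)" "\<Union>(set A) - Q = (\<Union>X\<in>set A. X - Q)"
    by blast+
  then obtain X Y where "X \<in> set A" "infinite (X \<inter> Q)" "Y \<in> set A" "infinite (Y - Q)"
    using assms(3,4) by (metis finite_UN finite_set)
  then obtain i j where i: "i < length A" "infinite (A ! i \<inter> Q)"
    and j: "j < length A" "infinite (A ! j - Q)"
    by (metis in_set_conv_nth)
  show ?thesis
  proof (cases "i = j")
    case False
    with i j that show ?thesis by blast
  next
    case True
    define l :: nat where "l = (if i = 0 then 1 else 0)"
    have l: "l < length A" "l \<noteq> i"
      using assms(2) unfolding l_def by auto
    have "infinite (A ! l \<inter> Q) \<or> infinite (A ! l - Q)"
      using assms(1)[OF l(1)] by (metis Int_Diff_Un finite_UnI)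
    with i j l True that show ?thesis by blast
  qed
qed

lemma class_problem_Union_infinite:
  assumes "class_problem S A"
  shows "infinite (\<Union>(set A))"
proof -
  have "0 < length A" using assms unfolding class_problem_def by linarith
  then have "A ! 0 \<in> set A" "infinite (A ! 0)"
    using assms unfolding class_problem_def by simp_all
  then show ?thesis by (meson Union_upper finite_subset)
qed

lemma core_k_imp_cohesive:
  assumes "F \<subseteq> Pow S" "class_problem S A" "length A > 1" "A \<in> core_k S F (length A)"
  shows "cohesive S F (\<Union>(set A))"
proof -
  let ?U = "\<Union>(set A)"
  have blocks_infinite: "\<And>i. i < length A \<Longrightarrow> infinite (A ! i)"
    and blocks_subset: "\<And>i. i < length A \<Longrightarrow> A ! i \<subseteq> S"
    using assms(2) unfolding class_problem_def by auto
  have "finite (?U \<inter> Q) \<or> finite (?U - Q)" if Q: "Q \<in> F" "S - Q \<in> F" for Q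
  proof (rule ccontr)
    assume "\<not> ?thesis"
    then have "infinite (?U \<inter> Q)" "infinite (?U - Q)" by simp_all
    then obtain a b where ab: "a < length A" "b < length A" "a \<noteq> b"
      "infinite (A ! a \<inter> Q)" "infinite (A ! b - Q)"
      using split_Union_distinct_blocks[OF blocks_infinite assms(3)] by blast
    let ?B = "[A ! a \<inter> Q, A ! b - Q]"
    have "Q \<subseteq> S" "A ! b - Q \<subseteq> S - Q"
      using Q(1) assms(1) blocks_subset[OF ab(2)] by blast+
    then have B_classified: "?B \<in> class_k S F 2"
      using class_problem_pair_in_class_2[OF Q _ Int_lower2 _ ab(4,5)] by blast
    then have "class_problem S ?B" unfolding class_k_def by blast
    moreover have "vec_le ?B A" by (rule vec_le_pair[OF ab(1-3) Int_lower1 Diff_subset])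
    moreover have "length ?B > 1" by simp
    ultimately have "?B \<notin> class_k S F (length ?B)"
      using assms(4) unfolding core_k_def by blast
    then show False using B_classified by (simp add: numeral_2_eq_2)
  qed
  with class_problem_Union_infinite[OF assms(2)] show ?thesis
    unfolding cohesive_def by blast
qed

lemma cohesive_imp_core_k:
  assumes "closed_fin_unions F" "{} \<in> F" "class_problem S A" "cohesive S F (\<Union>(set A))"
  shows "A \<in> core_k S F (length A)"
proof -
  have "B \<notin> class_k S F (length B)" if B: "class_problem S B" "vec_le B A" "length B > 1" for B
  proof -
    have "cohesive S F (\<Union>(set B))"
      using cohesive_subset[OF assms(4) vec_le_Union_subset[OF B(2)]]
        class_problem_Union_infinite[OF B(1)] by blast
    then show ?thesis
      using class_k_not_cohesive[OF assms(1,2) _ B(3)] by blast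
  qed
  then show ?thesis
    using assms(3) unfolding core_k_def by blast
qed

theorem theorem3p5:
  fixes S :: "'a set" and F :: "'a set set" and A :: "'a set list" and k :: nat
  assumes "infinite S"
    and "F \<subseteq> Pow S"
    and "nontrivial S F"
    and "closed_fin_unions F"
    and "class_problem S A"
    and "length A = k"
    and "k > 1"
  shows "A \<in> core_k S F k \<longleftrightarrow> cohesive S F (\<Union>(set A))"
proof
  assume "A \<in> core_k S F k"
  then show "cohesive S F (\<Union>(set A))"
    using core_k_imp_cohesive[OF assms(2,5)] assms(6,7) by simp
next
  have "{} \<in> F" using assms(3) unfolding nontrivial_def by blast
  moreover assume "cohesive S F (\<Union>(set A))"
  ultimately show "A \<in> core_k S F k"
    using cohesive_imp_core_k[OF assms(4) _ assms(5)] assms(6) by simp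
qed

end
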